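(* Let $(X,d)$ be a compact metric space without isolated points and let $f_{1,\infty}=\{f_n\}$ be a sequence of continuous maps $f_n:X\to X$ converging uniformly to $f$. If $(X,f_{1,\infty})$ is multi-transitive and the set of periodic points of $f_{1,\infty}$ is dense in $X$, then $(X,f_{1,\infty})$ is $\mathcal{N}$-sensitive.
   Context: Write $f_i^n=f_{n+i-1}\circ\cdots\circ f_i$, $f_i^0=\mathrm{id}$. A point $x$ is periodic for $f_{1,\infty}$ if there is $N\in\mathbb{N}$ with $f_1^{nN}(x)=x$ for every $n\in\mathbb{N}$. The system is multi-transitive if for every $m\in\mathbb{N}$ and all nonempty open $U_1,\dots,U_m,V_1,\dots,V_m\subseteq X$ there is $k\in\mathbb{N}$ with $f_1^{ik}(U_i)\cap V_i\ne\varnothing$ for each $i=1,\dots,m$. $f_{1,\infty}^{[k]}=\{f^k_{k(n-1)+1}\}_{n=1}^\infty$ (its $n$-fold composition from index $1$ is $f_1^{kn}$), and $N_{f_{1,\infty}}(V,\delta)=\{n\in\mathbb{N}:\exists u,v\in V,\ d(f_1^n(u),f_1^n(v))>\delta\}$. The system is $\mathcal{N}$-sensitive if for every $r\in\mathbb{N}$ there is $\delta>0$ such that $\bigcap_{i=1}^r N_{f_{1,\infty}^{[i]}}(U_i,\delta)\ne\varnothing$ for all nonempty open $U_1,\dots,U_r\subseteq X$. *)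

theory Defs
  imports "HOL-Analysis.Analysis"
begin

text \<open>Non-autonomous system f_{1,infinity}: the maps are f 1, f 2, ... (f 0 is ignored).
  ncomp f i n = f_(n+i-1) o ... o f_i, with ncomp f i 0 = id.\<close>
fun ncomp :: "(nat \<Rightarrow> 'a \<Rightarrow> 'a) \<Rightarrow> nat \<Rightarrow> nat \<Rightarrow> 'a \<Rightarrow> 'a" where
  "ncomp f i 0 = id"
| "ncomp f i (Suc n) = f (i + n) \<circ> ncomp f i n"

definition periodic_pt :: "(nat \<Rightarrow> 'a \<Rightarrow> 'a) \<Rightarrow> 'a \<Rightarrow> bool" where
  "periodic_pt f x \<longleftrightarrow> (\<exists>N\<ge>1. \<forall>n\<ge>1. ncomp f 1 (n * N) x = x)"

definition multi_transitive :: "(nat \<Rightarrow> 'a::topological_space \<Rightarrow> 'a) \<Rightarrow> bool" where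
  "multi_transitive f \<longleftrightarrow>
     (\<forall>m\<ge>1. \<forall>U V :: nat \<Rightarrow> 'a set.
        (\<forall>i\<in>{1..m}. open (U i) \<and> U i \<noteq> {} \<and> open (V i) \<and> V i \<noteq> {}) \<longrightarrow>
        (\<exists>k\<ge>1. \<forall>i\<in>{1..m}. ncomp f 1 (i * k) ` (U i) \<inter> V i \<noteq> {}))"

definition block_sys :: "(nat \<Rightarrow> 'a \<Rightarrow> 'a) \<Rightarrow> nat \<Rightarrow> nat \<Rightarrow> 'a \<Rightarrow> 'a" where
  "block_sys f k n = ncomp f (k * (n - 1) + 1) k"

definition sens_times :: "(nat \<Rightarrow> 'a::metric_space \<Rightarrow> 'a) \<Rightarrow> 'a set \<Rightarrow> real \<Rightarrow> nat set" where
  "sens_times f V \<delta> = {n. n \<ge> 1 \<and> (\<exists>u\<in>V. \<exists>v\<in>V. dist (ncomp f 1 n u) (ncomp f 1 n v) > \<delta>)}"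

definition N_sensitive :: "(nat \<Rightarrow> 'a::metric_space \<Rightarrow> 'a) \<Rightarrow> bool" where
  "N_sensitive f \<longleftrightarrow>
     (\<forall>r\<ge>1. \<exists>\<delta>>0. \<forall>U :: nat \<Rightarrow> 'a set.
        (\<forall>i\<in>{1..r}. open (U i) \<and> U i \<noteq> {}) \<longrightarrow>
        (\<Inter>i\<in>{1..r}. sens_times (block_sys f i) (U i) \<delta>) \<noteq> {})"

end

theory Submission
  imports Defs
begin

text \<open>Pick a periodic point \<open>p\<^sub>i\<close> in each \<open>U\<^sub>i\<close> and a common period \<open>N\<close> of them.
  Since the space has two points at distance \<open>4\<delta>\<close>, every \<open>p\<^sub>i\<close> is \<open>\<delta>\<close>-far from some ball
  \<open>B\<^sub>i\<close> of radius \<open>\<delta>\<close>. Multi-transitivity, applied to \<open>U\<^sub>i\<close>, \<open>B\<^sub>i\<close> placed at the indices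
  \<open>iN\<close> (and the whole space elsewhere), yields \<open>k\<close> with \<open>f\<^sub>1\<^bsup>iNk\<^esup>(U\<^sub>i) \<inter> B\<^sub>i \<noteq> {}\<close> for all \<open>i\<close>, while
  \<open>f\<^sub>1\<^bsup>iNk\<^esup>(p\<^sub>i) = p\<^sub>i\<close>. Hence the single time \<open>Nk\<close> separates two points of \<open>U\<^sub>i\<close> by more
  than \<open>\<delta>\<close> in every block system \<open>f\<^bsup>[i]\<^esup>\<close>.\<close>

lemma ncomp_add: "ncomp f a (m + n) = ncomp f (a + m) n \<circ> ncomp f a m"
  by (induction n) (auto simp: add_ac)

lemma ncomp_block_sys: "ncomp (block_sys f i) 1 n = ncomp f 1 (i * n)"
proof (induction n)
  case 0
  then show ?case by simp
next
  case (Suc n)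
  have "ncomp f 1 (i * Suc n) = ncomp f (1 + i * n) i \<circ> ncomp f 1 (i * n)"
    using ncomp_add[of f 1 "i * n" i] by (simp add: add_ac)
  then show ?case using Suc by (simp add: block_sys_def add_ac)
qed

lemma periodic_pts_common_period:
  assumes "finite I" and "\<forall>i\<in>I. periodic_pt f (p i)"
  shows "\<exists>N\<ge>1. \<forall>i\<in>I. \<forall>n\<ge>1. ncomp f 1 (n * N) (p i) = p i"
proof -
  obtain P where P: "\<forall>i\<in>I. P i \<ge> 1 \<and> (\<forall>n\<ge>1. ncomp f 1 (n * P i) (p i) = p i)"
    using assms(2) unfolding periodic_pt_def by metis
  define N where "N = (\<Prod>i\<in>I. P i)"
  have "N \<ge> 1"
    unfolding N_def using P by (simp add: Suc_le_eq prod_pos)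
  moreover have "ncomp f 1 (n * N) (p i) = p i" if i: "i \<in> I" and n: "n \<ge> 1" for i n
  proof -
    have "P i dvd N"
      unfolding N_def using assms(1) i by (rule dvd_prodI)
    then obtain q where q: "N = P i * q" ..
    with \<open>N \<ge> 1\<close> n have "n * q \<ge> 1" by simp
    then have "ncomp f 1 ((n * q) * P i) (p i) = p i" using P i by blast
    then show ?thesis by (simp add: q mult_ac)
  qed
  ultimately show ?thesis by blast
qed

lemma exists_ball_far_from:
  fixes a b p :: "'a::metric_space"
  shows "\<exists>c. \<forall>y\<in>ball c (dist a b / 4). dist a b / 4 < dist y p"
proof -
  have "dist a b / 2 \<le> dist p a \<or> dist a b / 2 \<le> dist p b"
    using dist_triangle3[of a b p] by linarith
  then obtain c where c: "dist a b / 2 \<le> dist p c" by blast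
  have "dist a b / 4 < dist y p" if "y \<in> ball c (dist a b / 4)" for y
  proof -
    have "dist y c < dist a b / 4" using that by (simp add: dist_commute)
    then show ?thesis using c dist_triangle3[of p c y] by linarith
  qed
  then show ?thesis by blast
qed

lemma multi_transitiveD:
  assumes "multi_transitive f" and "m \<ge> 1"
    and "\<forall>i\<in>{1..m}. open (U i) \<and> U i \<noteq> {} \<and> open (V i) \<and> V i \<noteq> {}"
  shows "\<exists>k\<ge>1. \<forall>i\<in>{1..m}. ncomp f 1 (i * k) ` U i \<inter> V i \<noteq> {}"
  using assms unfolding multi_transitive_def by simp

lemma multi_transitive_multiples:
  assumes "multi_transitive f" and "N \<ge> 1" and "r \<ge> 1"
    and "\<forall>i\<in>{1..r}. open (U i) \<and> U i \<noteq> {} \<and> open (V i) \<and> V i \<noteq> {}"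
  shows "\<exists>k\<ge>1. \<forall>i\<in>{1..r}. ncomp f 1 (i * N * k) ` U i \<inter> V i \<noteq> {}"
proof -
  define U' where "U' j = (if N dvd j then U (j div N) else UNIV)" for j
  define V' where "V' j = (if N dvd j then V (j div N) else UNIV)" for j
  have "open (U' j) \<and> U' j \<noteq> {} \<and> open (V' j) \<and> V' j \<noteq> {}" if "j \<in> {1..r * N}" for j
  proof (cases "N dvd j")
    case True
    then obtain t where "j = t * N" by (metis dvdE mult.commute)
    with that \<open>N \<ge> 1\<close> have "t \<in> {1..r}" by auto
    then show ?thesis using assms(4) True \<open>j = t * N\<close> \<open>N \<ge> 1\<close> by (simp add: U'_def V'_def)
  qed (simp add: U'_def V'_def)
  moreover have "r * N \<ge> 1" using assms(2,3) by simp
  ultimately obtain k where "k \<ge> 1"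
    and k: "\<forall>j\<in>{1..r * N}. ncomp f 1 (j * k) ` U' j \<inter> V' j \<noteq> {}"
    using multi_transitiveD[OF assms(1), of "r * N" U' V'] by blast
  have "ncomp f 1 (i * N * k) ` U i \<inter> V i \<noteq> {}" if "i \<in> {1..r}" for i
    using k[rule_format, of "i * N"] that \<open>N \<ge> 1\<close> by (simp add: U'_def V'_def)
  with \<open>k \<ge> 1\<close> show ?thesis by blast
qed

lemma N_sensitive_if_dense_periodic:
  fixes f :: "nat \<Rightarrow> 'a::metric_space \<Rightarrow> 'a" and a b :: 'a
  assumes "a \<noteq> b" and "multi_transitive f" and "closure {x. periodic_pt f x} = UNIV"
  shows "N_sensitive f"
  unfolding N_sensitive_def
proof (intro allI impI exI[of _ "dist a b / 4"] conjI)
  define \<delta> where "\<delta> = dist a b / 4"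
  show "\<delta> > 0" using assms(1) by (simp add: \<delta>_def)
  fix r :: nat and U :: "nat \<Rightarrow> 'a set"
  assume "r \<ge> 1" and U: "\<forall>i\<in>{1..r}. open (U i) \<and> U i \<noteq> {}"
  have "\<exists>x\<in>U i. periodic_pt f x" if "i \<in> {1..r}" for i
    using U that open_Int_closure_eq_empty[of "U i" "{x. periodic_pt f x}"] assms(3) by auto
  then obtain p where p: "\<forall>i\<in>{1..r}. p i \<in> U i \<and> periodic_pt f (p i)" by metis
  then obtain N where "N \<ge> 1" and N: "\<forall>i\<in>{1..r}. \<forall>n\<ge>1. ncomp f 1 (n * N) (p i) = p i"
    using periodic_pts_common_period[of "{1..r}" f p] by auto
  have "\<exists>c. \<forall>y\<in>ball c \<delta>. \<delta> < dist y (p i)" for i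
    unfolding \<delta>_def by (rule exists_ball_far_from)
  then obtain c where c: "\<forall>i. \<forall>y\<in>ball (c i) \<delta>. \<delta> < dist y (p i)" by metis
  obtain k where "k \<ge> 1" and k: "\<forall>i\<in>{1..r}. ncomp f 1 (i * N * k) ` U i \<inter> ball (c i) \<delta> \<noteq> {}"
    using multi_transitive_multiples[OF assms(2) \<open>N \<ge> 1\<close> \<open>r \<ge> 1\<close>, of U "\<lambda>i. ball (c i) \<delta>"]
      U \<open>\<delta> > 0\<close> by auto
  have "N * k \<in> sens_times (block_sys f i) (U i) \<delta>" if i: "i \<in> {1..r}" for i
  proof -
    obtain u where "u \<in> U i" and u: "ncomp f 1 (i * N * k) u \<in> ball (c i) \<delta>"
      using k i by blast
    have "i * k \<ge> 1" using i \<open>k \<ge> 1\<close> by simp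
    then have "ncomp f 1 ((i * k) * N) (p i) = p i"
      using N i by blast
    then have "ncomp f 1 (i * N * k) (p i) = p i"
      by (simp add: mult_ac)
    then have "\<delta> < dist (ncomp f 1 (i * N * k) u) (ncomp f 1 (i * N * k) (p i))"
      using c u by simp
    moreover have "p i \<in> U i" using p i by blast
    ultimately show ?thesis
      using \<open>u \<in> U i\<close> \<open>N \<ge> 1\<close> \<open>k \<ge> 1\<close>
      unfolding sens_times_def ncomp_block_sys by (auto simp: mult.assoc)
  qed
  then show "(\<Inter>i\<in>{1..r}. sens_times (block_sys f i) (U i) \<delta>) \<noteq> {}"
    using \<open>r \<ge> 1\<close> by blast
qed

theorem mainTheorem9:
  fixes f :: "nat \<Rightarrow> 'a::metric_space \<Rightarrow> 'a" and g :: "'a \<Rightarrow> 'a"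
  assumes "compact (UNIV :: 'a set)"
    and "\<forall>x::'a. x islimpt UNIV"
    and "\<forall>n\<ge>1. continuous_on UNIV (f n)"
    and "uniform_limit UNIV f g sequentially"
    and "multi_transitive f"
    and "closure {x. periodic_pt f x} = UNIV"
  shows "N_sensitive f"
proof -
  fix a :: 'a
  obtain b where "b \<noteq> a"
    using islimptE[OF assms(2)[rule_format, of a] UNIV_I open_UNIV] by blast
  then show ?thesis using assms(5,6) by (rule N_sensitive_if_dense_periodic)
qed

end
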